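(* Let $\varphi=\frac{1+\sqrt5}{2}$ be the golden ratio and let $(F_n)_{n\ge1}$ be the Fibonacci numbers with $F_1=F_2=1$ and $F_{n+1}=F_n+F_{n-1}$. For $n\in\mathbb{N}_{>0}$ let $\sigma_{F_n}\in S_{F_n}$ be the Kronecker permutation associated with $(\{k\varphi\})_{k=1}^{F_n}$, i.e. the unique permutation of $\{1,\dots,F_n\}$ with $\{\sigma_{F_n}(1)\varphi\}<\{\sigma_{F_n}(2)\varphi\}<\dots<\{\sigma_{F_n}(F_n)\varphi\}$. Then: (1) If $n$ is even, the cycle decomposition of $\sigma_{F_n}$ consists only of 2-cycles and fixed points. (2) If $n\equiv 1$ or $n\equiv 5 \pmod 6$, the cycle decomposition of $\sigma_{F_n}$ consists of cycles of length 4 and exactly one fixed point. (3) If $n\equiv 3 \pmod 6$, the cycle decomposition of $\sigma_{F_n}$ consists of cycles of length 4 and exactly one cycle of length 2.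
   Context: For real $x$, $\{x\}=x-\lfloor x\rfloor$ denotes the fractional part. For an irrational $\alpha>0$ and $N\in\mathbb{N}$, the $N$ numbers $\{k\alpha\}$, $1\le k\le N$, are distinct, and the Kronecker permutation $\sigma_N\in S_N$ is defined by ordering them increasingly: $\{\sigma_N(1)\alpha\}<\dots<\{\sigma_N(N)\alpha\}$. Cycle lengths refer to the disjoint cycle decomposition of the permutation (a fixed point is a cycle of length 1). *)

theory Defs
  imports Complex_Main "HOL-Combinatorics.Combinatorics" "HOL-Number_Theory.Fib"
begin

definition kronecker_perm :: "real \<Rightarrow> nat \<Rightarrow> nat \<Rightarrow> nat" where
  "kronecker_perm \<alpha> N = (THE \<sigma>. \<sigma> permutes {1..N} \<and>
      (\<forall>i\<in>{1..N}. \<forall>j\<in>{1..N}. i < j \<longrightarrow> frac (real (\<sigma> i) * \<alpha>) < frac (real (\<sigma> j) * \<alpha>)))"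

definition golden_ratio :: real where
  "golden_ratio = (1 + sqrt 5) / 2"

definition cycles_of :: "('a \<Rightarrow> 'a) \<Rightarrow> 'a set \<Rightarrow> 'a set set" where
  "cycles_of p A = (\<lambda>x. orbit p x) ` A"

end

theory Submission
  imports Defs "HOL-Number_Theory.Cong"
begin

(* Write F = fib n, m = fib (n + 1) and psi = (1 - sqrt 5) / 2. Binet's formula gives
   F * phi = m - psi^n, and |k * psi^n| < 1 for k <= F; hence frac (k * phi) lies strictly
   between (r - 1) / F and r / F, where r is the representative in {1..F} of k * m + [n odd]
   modulo F. So the Kronecker permutation is the inverse of the affine map x |-> m x + [n odd]
   on the residues modulo F. Cassini's identity gives m^2 = (-1)^n (mod F). For even n the map
   is an involution. For odd n its square is the reflection x |-> m + 1 - x, so it has order 4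
   and its points of period at most 2 solve 2 x = m + 1 (mod F): one point, necessarily fixed,
   when F is odd; two points, forming the only 2-cycle (m is then odd, which rules out fixed
   points), when F is even. Finally, fib n is even iff 3 divides n. *)

lemma cycles_of_inv:
  assumes "permutation p"
  shows "cycles_of (inv p) A = cycles_of p A"
  using orbit_inv_eq[OF assms] by (simp add: cycles_of_def)

lemma orbit_eq_if_funpow_2:
  assumes "p (p x) = x"
  shows "orbit p x = {x, p x}"
proof
  show "orbit p x \<subseteq> {x, p x}"
  proof
    fix y assume "y \<in> orbit p x"
    then show "y \<in> {x, p x}" by induct (use assms in auto)
  qed
  show "{x, p x} \<subseteq> orbit p x"
    using assms orbit.base[of p x] orbit.step[OF orbit.base, of p x] by simp
qed

lemma orbit_eq_if_funpow_4:
  assumes "p (p (p (p x))) = x"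
  shows "orbit p x = {x, p x, p (p x), p (p (p x))}"
proof
  show "orbit p x \<subseteq> {x, p x, p (p x), p (p (p x))}"
  proof
    fix y assume "y \<in> orbit p x"
    then show "y \<in> {x, p x, p (p x), p (p (p x))}" by induct (use assms in auto)
  qed
  have 1: "p x \<in> orbit p x" by (rule orbit.base)
  then have 2: "p (p x) \<in> orbit p x" by (rule orbit.step)
  then have 3: "p (p (p x)) \<in> orbit p x" by (rule orbit.step)
  then have "p (p (p (p x))) \<in> orbit p x" by (rule orbit.step)
  with 1 2 3 assms show "{x, p x, p (p x), p (p (p x))} \<subseteq> orbit p x"
    by simp
qed

lemma card_orbit_if_funpow_4:
  assumes "inj p" "p (p (p (p x))) = x"
  shows "card (orbit p x) = (if p x = x then 1 else if p (p x) = x then 2 else 4)"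
proof (cases "p x = x")
  case True
  then show ?thesis by (simp add: orbit_eq_singleton_iff[THEN iffD2])
next
  case moved: False
  show ?thesis
  proof (cases "p (p x) = x")
    case True
    then show ?thesis using moved orbit_eq_if_funpow_2[of p x] by simp
  next
    case False
    have "p (p (p x)) \<noteq> x" using moved assms(2) by metis
    moreover have "p (p (p x)) \<noteq> p x" "p (p x) \<noteq> p x" "p (p (p x)) \<noteq> p (p x)"
      using moved False inj_eq[OF assms(1)] by simp_all
    ultimately show ?thesis
      using moved False orbit_eq_if_funpow_4[of p x, OF assms(2)] by simp
  qed
qed

lemma card_cycles_of_eq_1:
  assumes "permutation p" "x\<^sub>0 \<in> A" "card (orbit p x\<^sub>0) = k"
    and "\<And>x. x \<in> A \<Longrightarrow> card (orbit p x) = k \<Longrightarrow> x \<in> orbit p x\<^sub>0"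
  shows "card {c \<in> cycles_of p A. card c = k} = 1"
proof -
  have "orbit p x = orbit p x\<^sub>0" if "x \<in> A" "card (orbit p x) = k" for x
    using orbit_cyclic_eq3[OF cyclic_on_orbit'[OF assms(1)] assms(4)[OF that]] .
  then have "{c \<in> cycles_of p A. card c = k} = {orbit p x\<^sub>0}"
    using assms(2,3) unfolding cycles_of_def by blast
  then show ?thesis by simp
qed

lemma eq_if_cong_atLeastAtMost:
  assumes "x \<in> {1..N}" "y \<in> {1..N}" "[int x = int y] (mod int N)"
  shows "x = y"
proof -
  have "[int x - 1 = int y - 1] (mod int N)"
    using assms(3) by (simp add: cong_diff)
  then have "int x - 1 = int y - 1"
    using assms(1,2) by (intro cong_less_imp_eq_int) auto
  then show ?thesis by simp
qed

lemma abs_eq_if_dvd_less_double: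
  fixes d h :: int
  assumes "h dvd d" "\<bar>d\<bar> < 2 * h" "d \<noteq> 0"
  shows "\<bar>d\<bar> = h"
proof -
  obtain k where k: "d = h * k" using assms(1) by (rule dvdE)
  with assms(3) have "k \<noteq> 0" by simp
  have "h > 0" using assms(2) by simp
  with assms(2) k have "\<bar>k\<bar> < 2"
    by (simp add: abs_mult mult_less_cancel_left_pos)
  with \<open>k \<noteq> 0\<close> have "\<bar>k\<bar> = 1" by linarith
  with k \<open>h > 0\<close> show ?thesis by (simp add: abs_mult)
qed

lemma cong_half_modulus_cases:
  fixes h :: nat
  assumes "x \<in> {1..2*h}" "y \<in> {1..2*h}" "z \<in> {1..2*h}" "x \<noteq> y"
    and "[int y = int x] (mod int h)" "[int z = int x] (mod int h)"
  shows "z = x \<or> z = y"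
proof -
  have dist_eq: "\<bar>int w - int x\<bar> = int h"
    if "w \<in> {1..2*h}" "w \<noteq> x" "[int w = int x] (mod int h)" for w
  proof (rule abs_eq_if_dvd_less_double)
    show "int h dvd int w - int x"
      using that(3) by (simp add: cong_iff_dvd_diff)
    show "\<bar>int w - int x\<bar> < 2 * int h"
      using that(1) assms(1) unfolding abs_less_iff atLeastAtMost_iff by linarith
  qed (use that(2) in simp)
  show ?thesis
  proof (rule ccontr)
    assume "\<not> (z = x \<or> z = y)"
    then have "\<bar>int y - int x\<bar> = int h" "\<bar>int z - int x\<bar> = int h" "int z \<noteq> int y"
      using dist_eq[OF assms(2) assms(4)[symmetric] assms(5)] dist_eq[OF assms(3) _ assms(6)]
      by simp_all
    moreover have "\<bar>int z - int y\<bar> < 2 * int h"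
      using assms(2,3) unfolding abs_less_iff atLeastAtMost_iff by linarith
    ultimately show False by (simp add: abs_if split: if_splits)
  qed
qed

lemma cong_mult_left_cancel_modulus:
  fixes a b c m :: int
  assumes "c \<noteq> 0"
  shows "[c * a = c * b] (mod c * m) \<longleftrightarrow> [a = b] (mod m)"
proof -
  have "c * a - c * b = c * (a - b)" by (simp add: algebra_simps)
  then show ?thesis
    using assms by (simp add: cong_iff_dvd_diff)
qed

lemma odd_if_square_cong_neg1:
  assumes "even N" "[a * a = -1] (mod int N)"
  shows "odd a"
proof -
  have "[a * a = -1] (mod 2)"
    using assms by (metis cong_dvd_modulus even_of_nat)
  then show ?thesis
    by (auto simp: cong_iff_dvd_diff)
qed

section \<open>Affine maps modulo N\<close>

(* The map x |-> a x + b on residues modulo N, each residue represented by its element of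
   {1..N}; it is the identity outside {1..N}, so that it can permute {1..N}. *)
definition affine_mod :: "nat \<Rightarrow> int \<Rightarrow> int \<Rightarrow> nat \<Rightarrow> nat" where
  "affine_mod N a b x = (if x \<in> {1..N} then nat ((a * int x + b - 1) mod int N) + 1 else x)"

lemma affine_mod_in:
  assumes "x \<in> {1..N}"
  shows "affine_mod N a b x \<in> {1..N}"
proof -
  have "0 \<le> (a * int x + b - 1) mod int N" "(a * int x + b - 1) mod int N < int N"
    using assms by simp_all
  then show ?thesis
    using assms by (simp add: affine_mod_def nat_less_iff Suc_le_eq)
qed

lemma affine_mod_cong:
  assumes "x \<in> {1..N}"
  shows "[int (affine_mod N a b x) = a * int x + b] (mod int N)"
proof -
  have "int (affine_mod N a b x) = (a * int x + b - 1) mod int N + 1"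
    using assms by (simp add: affine_mod_def)
  also have "[\<dots> = (a * int x + b - 1) + 1] (mod int N)"
    by (intro cong_add cong_refl) (simp add: cong_def)
  finally show ?thesis by simp
qed

lemma affine_mod_eq_iff:
  assumes "x \<in> {1..N}" "y \<in> {1..N}"
  shows "affine_mod N a b x = y \<longleftrightarrow> [int y = a * int x + b] (mod int N)"
proof
  assume "[int y = a * int x + b] (mod int N)"
  then have "[int (affine_mod N a b x) = int y] (mod int N)"
    using affine_mod_cong[OF assms(1)] cong_sym cong_trans by blast
  then show "affine_mod N a b x = y"
    using assms affine_mod_in[OF assms(1)] by (intro eq_if_cong_atLeastAtMost)
qed (use affine_mod_cong[OF assms(1)] in blast)

lemma affine_mod_affine_mod:
  assumes x: "x \<in> {1..N}"
  shows "affine_mod N a b (affine_mod N c d x) = affine_mod N (a * c) (a * d + b) x"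
proof (rule eq_if_cong_atLeastAtMost)
  have "[int (affine_mod N a b (affine_mod N c d x)) = a * int (affine_mod N c d x) + b] (mod int N)"
    using x by (intro affine_mod_cong affine_mod_in)
  moreover have "[a * int (affine_mod N c d x) + b = a * (c * int x + d) + b] (mod int N)"
    using affine_mod_cong[OF x] by (intro cong_add cong_scalar_left cong_refl)
  moreover have "a * (c * int x + d) + b = (a * c) * int x + (a * d + b)"
    by (simp add: algebra_simps)
  moreover have "[int (affine_mod N (a * c) (a * d + b) x) = (a * c) * int x + (a * d + b)] (mod int N)"
    using x by (rule affine_mod_cong)
  ultimately show "[int (affine_mod N a b (affine_mod N c d x)) =
      int (affine_mod N (a * c) (a * d + b) x)] (mod int N)"
    by (metis cong_sym cong_trans)
qed (intro affine_mod_in x)+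

lemma affine_mod_cong_coeffs:
  assumes "[a = c] (mod int N)" "[b = d] (mod int N)"
  shows "affine_mod N a b = affine_mod N c d"
proof
  fix x
  have "[a * int x + b - 1 = c * int x + d - 1] (mod int N)"
    using assms by (intro cong_diff cong_add cong_mult cong_refl)
  then show "affine_mod N a b x = affine_mod N c d x"
    by (simp add: affine_mod_def cong_def)
qed

lemma affine_mod_1_0: "affine_mod N 1 0 x = x"
  by (cases "x \<in> {1..N}") (auto simp: affine_mod_eq_iff affine_mod_def)

lemma affine_mod_permutes:
  assumes "coprime a (int N)"
  shows "affine_mod N a b permutes {1..N}"
proof (rule bij_imp_permutes)
  have "inj_on (affine_mod N a b) {1..N}"
  proof (rule inj_onI)
    fix x y assume xy: "x \<in> {1..N}" "y \<in> {1..N}" "affine_mod N a b x = affine_mod N a b y"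
    then have "[a * int x + b = a * int y + b] (mod int N)"
      by (metis affine_mod_cong cong_sym cong_trans)
    then have "[int x = int y] (mod int N)"
      using assms by (simp add: cong_add_rcancel cong_mult_lcancel)
    with xy(1,2) show "x = y"
      by (rule eq_if_cong_atLeastAtMost)
  qed
  moreover have "affine_mod N a b ` {1..N} \<subseteq> {1..N}"
    using affine_mod_in by blast
  ultimately show "bij_betw (affine_mod N a b) {1..N} {1..N}"
    by (simp add: bij_betw_def endo_inj_surj)
qed (auto simp: affine_mod_def)

lemma ex_atLeastAtMost_cong:
  assumes "N > 0"
  shows "\<exists>x\<in>{1..N}. [int x = b] (mod int N)"
proof
  have "1 \<in> {1..N}" using assms by simp
  then show "affine_mod N 0 b 1 \<in> {1..N}" "[int (affine_mod N 0 b 1) = b] (mod int N)"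
    using affine_mod_in affine_mod_cong[of 1 N 0 b] by simp_all
qed

lemma cycles_of_affine_mod_involution:
  assumes "[a * a = 1] (mod int N)"
  shows "\<forall>c \<in> cycles_of (affine_mod N a 0) {1..N}. card c \<in> {1, 2}"
proof
  fix c assume "c \<in> cycles_of (affine_mod N a 0) {1..N}"
  then obtain x where x: "x \<in> {1..N}" and c: "c = orbit (affine_mod N a 0) x"
    by (auto simp: cycles_of_def)
  have "affine_mod N a 0 (affine_mod N a 0 x) = affine_mod N 1 0 x"
    using affine_mod_affine_mod[OF x] affine_mod_cong_coeffs[OF assms cong_refl] by simp
  then have "c = {x, affine_mod N a 0 x}"
    unfolding c affine_mod_1_0 by (rule orbit_eq_if_funpow_2)
  then show "card c \<in> {1, 2}"
    by (cases "affine_mod N a 0 x = x") auto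
qed

lemma affine_mod_sqrt_neg1_twice:
  assumes "[a * a = -1] (mod int N)" "x \<in> {1..N}"
  shows "affine_mod N a 1 (affine_mod N a 1 x) = affine_mod N (-1) (a + 1) x"
proof -
  have "affine_mod N a 1 (affine_mod N a 1 x) = affine_mod N (a * a) (a + 1) x"
    using affine_mod_affine_mod[OF assms(2), of a 1 a 1] by simp
  also have "\<dots> = affine_mod N (-1) (a + 1) x"
    by (simp add: affine_mod_cong_coeffs[OF assms(1) cong_refl])
  finally show ?thesis .
qed

lemma affine_mod_sqrt_neg1_four_times:
  assumes "[a * a = -1] (mod int N)" "x \<in> {1..N}"
  shows "affine_mod N a 1 (affine_mod N a 1 (affine_mod N a 1 (affine_mod N a 1 x))) = x"
proof -
  have "affine_mod N a 1 (affine_mod N a 1 x) \<in> {1..N}"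
    using assms(2) by (intro affine_mod_in)
  then show ?thesis
    using assms affine_mod_affine_mod[OF assms(2), of "-1" "a + 1" "-1" "a + 1"]
    by (simp add: affine_mod_sqrt_neg1_twice affine_mod_1_0)
qed

lemma affine_mod_sqrt_neg1_twice_eq_iff:
  assumes "[a * a = -1] (mod int N)" "x \<in> {1..N}"
  shows "affine_mod N a 1 (affine_mod N a 1 x) = x \<longleftrightarrow> [2 * int x = a + 1] (mod int N)"
proof -
  have "[int x = - int x + (a + 1)] (mod int N) \<longleftrightarrow> [2 * int x = a + 1] (mod int N)"
    by (simp add: cong_iff_dvd_diff algebra_simps)
  then show ?thesis
    using assms by (simp add: affine_mod_sqrt_neg1_twice affine_mod_eq_iff)
qed

lemma permutes_affine_mod_sqrt_neg1:
  assumes "[a * a = -1] (mod int N)"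
  shows "affine_mod N a 1 permutes {1..N}"
proof (rule affine_mod_permutes)
  have "[a * - a = 1] (mod int N)"
    using cong_uminus[OF assms] by simp
  then show "coprime a (int N)"
    using coprime_iff_invertible_int by blast
qed

lemma card_orbit_affine_mod_sqrt_neg1:
  assumes "[a * a = -1] (mod int N)" "x \<in> {1..N}"
  defines "p \<equiv> affine_mod N a 1"
  shows "card (orbit p x) = (if p x = x then 1 else if p (p x) = x then 2 else 4)"
  unfolding p_def
proof (rule card_orbit_if_funpow_4)
  show "inj (affine_mod N a 1)"
    using permutes_affine_mod_sqrt_neg1[OF assms(1)] by (rule permutes_inj)
qed (rule affine_mod_sqrt_neg1_four_times[OF assms(1,2)])

lemma affine_mod_sqrt_neg1_period_2_odd:
  assumes "odd N" "[a * a = -1] (mod int N)"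
  obtains x\<^sub>0 where "x\<^sub>0 \<in> {1..N}"
    "\<And>x. x \<in> {1..N} \<Longrightarrow> affine_mod N a 1 (affine_mod N a 1 x) = x \<longleftrightarrow> x = x\<^sub>0"
proof -
  obtain u where u: "[2 * u = 1] (mod int N)"
    using assms(1) cong_solve_coprime_int[of 2 "int N"] by auto
  obtain x\<^sub>0 where x\<^sub>0: "x\<^sub>0 \<in> {1..N}" "[int x\<^sub>0 = (a + 1) * u] (mod int N)"
    using ex_atLeastAtMost_cong[of N] assms(1) by (metis odd_pos)
  have "[2 * int x\<^sub>0 = a + 1] (mod int N)"
    using cong_scalar_left[OF x\<^sub>0(2), of 2] cong_scalar_left[OF u, of "a + 1"]
    by (simp add: ac_simps cong_trans)
  have "affine_mod N a 1 (affine_mod N a 1 x) = x \<longleftrightarrow> x = x\<^sub>0" if x: "x \<in> {1..N}" for x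
  proof -
    have "affine_mod N a 1 (affine_mod N a 1 x) = x \<longleftrightarrow> [2 * int x = 2 * int x\<^sub>0] (mod int N)"
      using affine_mod_sqrt_neg1_twice_eq_iff[OF assms(2) x] \<open>[2 * int x\<^sub>0 = a + 1] (mod int N)\<close>
      by (meson cong_sym cong_trans)
    also have "\<dots> \<longleftrightarrow> [int x = int x\<^sub>0] (mod int N)"
      using assms(1) by (simp add: cong_mult_lcancel)
    also have "\<dots> \<longleftrightarrow> x = x\<^sub>0"
      using x x\<^sub>0(1) eq_if_cong_atLeastAtMost[of x N x\<^sub>0] by auto
    finally show ?thesis .
  qed
  with x\<^sub>0(1) show ?thesis by (rule that)
qed

lemma cycles_of_affine_mod_sqrt_neg1_odd:
  assumes "odd N" "[a * a = -1] (mod int N)"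
  defines "C \<equiv> cycles_of (affine_mod N a 1) {1..N}"
  shows "(\<forall>c\<in>C. card c \<in> {1, 4}) \<and> card {c\<in>C. card c = 1} = 1"
proof -
  define p where "p = affine_mod N a 1"
  note card_orbit = card_orbit_affine_mod_sqrt_neg1[OF assms(2), folded p_def]
  obtain x\<^sub>0 where x\<^sub>0: "x\<^sub>0 \<in> {1..N}"
    and period_2_iff: "\<And>x. x \<in> {1..N} \<Longrightarrow> p (p x) = x \<longleftrightarrow> x = x\<^sub>0"
    using affine_mod_sqrt_neg1_period_2_odd[OF assms(1,2)] unfolding p_def by blast
  have "p x\<^sub>0 \<in> {1..N}"
    using x\<^sub>0 unfolding p_def by (rule affine_mod_in)
  then have fixed: "p x\<^sub>0 = x\<^sub>0"
    using period_2_iff x\<^sub>0 by metis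
  have "card c \<in> {1, 4}" if "c \<in> C" for c
  proof -
    obtain x where x: "x \<in> {1..N}" "c = orbit p x"
      using \<open>c \<in> C\<close> by (auto simp: C_def cycles_of_def p_def)
    show ?thesis
      using card_orbit[OF x(1)] period_2_iff[OF x(1)] fixed x(2) by auto
  qed
  moreover have "card {c\<in>C. card c = 1} = 1"
    unfolding C_def p_def[symmetric]
  proof (rule card_cycles_of_eq_1)
    show "permutation p"
      using permutes_affine_mod_sqrt_neg1[OF assms(2)] by (auto simp: p_def permutation_permutes)
    show "card (orbit p x\<^sub>0) = 1"
      using card_orbit[OF x\<^sub>0] fixed by simp
    show "x \<in> orbit p x\<^sub>0" if "x \<in> {1..N}" "card (orbit p x) = 1" for x
    proof -
      have "p x = x"
      proof (rule ccontr)
        assume "p x \<noteq> x"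
        then have "card (orbit p x) \<noteq> 1"
          using card_orbit[OF that(1)] by simp
        with that(2) show False by contradiction
      qed
      then have "x = x\<^sub>0"
        using period_2_iff[OF that(1)] by simp
      then show ?thesis
        using permutation_self_in_orbit[OF \<open>permutation p\<close>] by simp
    qed
  qed (rule x\<^sub>0)
  ultimately show ?thesis by blast
qed

lemma affine_mod_sqrt_neg1_no_fixed_point_even:
  assumes "even N" "[a * a = -1] (mod int N)" "x \<in> {1..N}"
  shows "affine_mod N a 1 x \<noteq> x"
proof
  assume "affine_mod N a 1 x = x"
  then have "[int x = a * int x + 1] (mod int N)"
    using affine_mod_cong[OF assms(3), of a 1] by simp
  then have "[int x = a * int x + 1] (mod 2)"
    using assms(1) by (metis cong_dvd_modulus even_of_nat)
  then show False
    using odd_if_square_cong_neg1[OF assms(1,2)] by (auto simp: cong_iff_dvd_diff)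
qed

lemma affine_mod_sqrt_neg1_period_2_even:
  assumes "even N" "N > 0" "[a * a = -1] (mod int N)"
  obtains x\<^sub>0 where "x\<^sub>0 \<in> {1..N}" "affine_mod N a 1 (affine_mod N a 1 x\<^sub>0) = x\<^sub>0"
    "\<And>x. x \<in> {1..N} \<Longrightarrow> affine_mod N a 1 (affine_mod N a 1 x) = x \<Longrightarrow>
      x = x\<^sub>0 \<or> x = affine_mod N a 1 x\<^sub>0"
proof -
  define p where "p = affine_mod N a 1"
  obtain x\<^sub>0 where x\<^sub>0: "x\<^sub>0 \<in> {1..N}" "[int x\<^sub>0 = (a + 1) div 2] (mod int N)"
    using ex_atLeastAtMost_cong[OF assms(2)] by blast
  have "2 * ((a + 1) div 2) = a + 1"
    using odd_if_square_cong_neg1[OF assms(1,3)] by presburger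
  then have "[2 * int x\<^sub>0 = a + 1] (mod int N)"
    using cong_scalar_left[OF x\<^sub>0(2), of 2] by simp
  have period_2_iff: "p (p x) = x \<longleftrightarrow> [int x = int x\<^sub>0] (mod int (N div 2))"
    if x: "x \<in> {1..N}" for x
  proof -
    have "p (p x) = x \<longleftrightarrow> [2 * int x = 2 * int x\<^sub>0] (mod int N)"
      using affine_mod_sqrt_neg1_twice_eq_iff[OF assms(3) x] \<open>[2 * int x\<^sub>0 = a + 1] (mod int N)\<close>
      unfolding p_def by (meson cong_sym cong_trans)
    also have "int N = 2 * int (N div 2)"
      using assms(1) by (auto elim: evenE)
    also have "[2 * int x = 2 * int x\<^sub>0] (mod 2 * int (N div 2)) \<longleftrightarrow>
        [int x = int x\<^sub>0] (mod int (N div 2))"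
      by (rule cong_mult_left_cancel_modulus) simp
    finally show ?thesis .
  qed
  have "p x\<^sub>0 \<in> {1..N}"
    using x\<^sub>0(1) unfolding p_def by (rule affine_mod_in)
  have "p (p x\<^sub>0) = x\<^sub>0"
    using period_2_iff[OF x\<^sub>0(1)] by simp
  have "x = x\<^sub>0 \<or> x = p x\<^sub>0" if "x \<in> {1..N}" "p (p x) = x" for x
  proof (rule cong_half_modulus_cases)
    show "x\<^sub>0 \<in> {1..2 * (N div 2)}" "p x\<^sub>0 \<in> {1..2 * (N div 2)}" "x \<in> {1..2 * (N div 2)}"
      using x\<^sub>0(1) \<open>p x\<^sub>0 \<in> {1..N}\<close> that(1) assms(1) by simp_all
    show "x\<^sub>0 \<noteq> p x\<^sub>0"
      using affine_mod_sqrt_neg1_no_fixed_point_even[OF assms(1,3) x\<^sub>0(1)] by (simp add: p_def)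
    show "[int (p x\<^sub>0) = int x\<^sub>0] (mod int (N div 2))"
      using period_2_iff[OF \<open>p x\<^sub>0 \<in> {1..N}\<close>] \<open>p (p x\<^sub>0) = x\<^sub>0\<close> by simp
    show "[int x = int x\<^sub>0] (mod int (N div 2))"
      using period_2_iff[OF that(1)] that(2) by simp
  qed
  with x\<^sub>0(1) \<open>p (p x\<^sub>0) = x\<^sub>0\<close> show ?thesis
    unfolding p_def by (rule that)
qed

lemma cycles_of_affine_mod_sqrt_neg1_even:
  assumes "even N" "N > 0" "[a * a = -1] (mod int N)"
  defines "C \<equiv> cycles_of (affine_mod N a 1) {1..N}"
  shows "(\<forall>c\<in>C. card c \<in> {2, 4}) \<and> card {c\<in>C. card c = 2} = 1"
proof -
  define p where "p = affine_mod N a 1"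
  note card_orbit = card_orbit_affine_mod_sqrt_neg1[OF assms(3), folded p_def]
  note no_fixed = affine_mod_sqrt_neg1_no_fixed_point_even[OF assms(1,3), folded p_def]
  obtain x\<^sub>0 where x\<^sub>0: "x\<^sub>0 \<in> {1..N}" "p (p x\<^sub>0) = x\<^sub>0"
    and period_2_cases: "\<And>x. x \<in> {1..N} \<Longrightarrow> p (p x) = x \<Longrightarrow> x = x\<^sub>0 \<or> x = p x\<^sub>0"
    using affine_mod_sqrt_neg1_period_2_even[OF assms(1-3)] unfolding p_def by blast
  have "card c \<in> {2, 4}" if "c \<in> C" for c
  proof -
    obtain x where x: "x \<in> {1..N}" "c = orbit p x"
      using \<open>c \<in> C\<close> by (auto simp: C_def cycles_of_def p_def)
    show ?thesis
      using card_orbit[OF x(1)] no_fixed[OF x(1)] x(2) by simp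
  qed
  moreover have "card {c\<in>C. card c = 2} = 1"
    unfolding C_def p_def[symmetric]
  proof (rule card_cycles_of_eq_1)
    show "permutation p"
      using permutes_affine_mod_sqrt_neg1[OF assms(3)] by (auto simp: p_def permutation_permutes)
    show "card (orbit p x\<^sub>0) = 2"
      using card_orbit[OF x\<^sub>0(1)] no_fixed[OF x\<^sub>0(1)] x\<^sub>0(2) by simp
    show "x \<in> orbit p x\<^sub>0" if "x \<in> {1..N}" "card (orbit p x) = 2" for x
    proof -
      have "p (p x) = x"
        using card_orbit[OF that(1)] no_fixed[OF that(1)] that(2) by (auto split: if_splits)
      then have "x = x\<^sub>0 \<or> x = p x\<^sub>0"
        using period_2_cases[OF that(1)] by blast
      then show ?thesis
        using permutation_self_in_orbit[OF \<open>permutation p\<close>, of x\<^sub>0] orbit.base[of p x\<^sub>0] by blast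
    qed
  qed (rule x\<^sub>0(1))
  ultimately show ?thesis by blast
qed

section \<open>Sorting permutations\<close>

lemma permutes_apply_eq_card_le:
  fixes f :: "nat \<Rightarrow> 'a::linorder"
  assumes g: "g permutes {1..N}"
    and mono: "\<And>a b. a \<in> {1..N} \<Longrightarrow> b \<in> {1..N} \<Longrightarrow> g a < g b \<Longrightarrow> f a < f b"
    and x: "x \<in> {1..N}"
  shows "g x = card {y \<in> {1..N}. f y \<le> f x}"
proof -
  have "f y \<le> f x \<longleftrightarrow> g y \<le> g x" if y: "y \<in> {1..N}" for y
  proof (cases "g y" "g x" rule: linorder_cases)
    case equal
    then have "y = x"
      using permutes_inj[OF g] by (simp add: inj_eq)
    then show ?thesis by simp
  qed (use mono[OF y x] mono[OF x y] in auto)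
  then have "{y \<in> {1..N}. f y \<le> f x} = {y \<in> {1..N}. g y \<le> g x}"
    by blast
  then have "card {y \<in> {1..N}. f y \<le> f x} = card (g ` {y \<in> {1..N}. g y \<le> g x})"
    by (simp add: card_image permutes_inj_on[OF g])
  also have "g ` {y \<in> {1..N}. g y \<le> g x} = {z \<in> g ` {1..N}. z \<le> g x}"
    by blast
  also have "\<dots> = {1..g x}"
    using permutes_image[OF g] permutes_in_image[OF g, of x] x by auto
  finally show ?thesis by simp
qed

lemma kronecker_perm_eq_inv:
  assumes g: "g permutes {1..N}"
    and mono: "\<And>a b. a \<in> {1..N} \<Longrightarrow> b \<in> {1..N} \<Longrightarrow> g a < g b \<Longrightarrow>
      frac (real a * \<alpha>) < frac (real b * \<alpha>)"
  shows "kronecker_perm \<alpha> N = inv g"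
  unfolding kronecker_perm_def
proof (rule the_equality)
  show "inv g permutes {1..N} \<and> (\<forall>i\<in>{1..N}. \<forall>j\<in>{1..N}. i < j \<longrightarrow>
      frac (real (inv g i) * \<alpha>) < frac (real (inv g j) * \<alpha>))"
    using permutes_inv[OF g] mono permutes_in_image[OF permutes_inv[OF g]]
    by (simp add: permutes_inverses(1)[OF g])
next
  fix \<sigma>
  assume \<sigma>: "\<sigma> permutes {1..N} \<and> (\<forall>i\<in>{1..N}. \<forall>j\<in>{1..N}. i < j \<longrightarrow>
      frac (real (\<sigma> i) * \<alpha>) < frac (real (\<sigma> j) * \<alpha>))"
  then have \<sigma>': "inv \<sigma> permutes {1..N}"
    by (simp add: permutes_inv)
  have inv_\<sigma>_mono: "frac (real a * \<alpha>) < frac (real b * \<alpha>)"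
    if "a \<in> {1..N}" "b \<in> {1..N}" "inv \<sigma> a < inv \<sigma> b" for a b
    using \<sigma> that permutes_in_image[OF \<sigma>'] by (metis permutes_inverses(1))
  have "inv \<sigma> x = g x" for x
  proof (cases "x \<in> {1..N}")
    case True
    show ?thesis
      using permutes_apply_eq_card_le[OF \<sigma>' inv_\<sigma>_mono True] permutes_apply_eq_card_le[OF g mono True]
      by (rule trans[OF _ sym])
  next
    case False
    then show ?thesis
      using permutes_not_in[OF \<sigma>'] permutes_not_in[OF g] by simp
  qed
  then show "\<sigma> = inv g"
    using \<sigma> by (metis ext inv_inv_eq permutes_bij)
qed

lemma frac_of_int_add_div:
  fixes a :: int and \<theta> :: real
  assumes "N > 0" "0 \<le> \<theta>" "\<theta> < 1"
  shows "frac ((of_int a + \<theta>) / real N) = (of_int (a mod int N) + \<theta>) / real N"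
proof -
  have "a mod int N < int N"
    using assms(1) by simp
  then have "of_int (a mod int N) + 1 \<le> real N"
    by linarith
  then have "of_int (a mod int N) + \<theta> < real N"
    using assms(3) by linarith
  moreover have "of_int a = real N * of_int (a div int N) + of_int (a mod int N)"
    by (metis mult_div_mod_eq of_int_add of_int_mult of_int_of_nat_eq)
  then have "(of_int a + \<theta>) / real N - (of_int (a mod int N) + \<theta>) / real N = of_int (a div int N)"
    using assms(1) by (simp add: field_simps)
  ultimately show ?thesis
    using assms by (simp add: frac_unique_iff)
qed

section \<open>The golden ratio\<close>

definition golden_ratio_conj :: real where
  "golden_ratio_conj = (1 - sqrt 5) / 2"

lemma golden_ratio_mult_conj: "golden_ratio * golden_ratio_conj = -1"
  by (simp add: golden_ratio_def golden_ratio_conj_def field_simps)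

lemma fib_mult_golden_ratio:
  "real (fib n) * golden_ratio = real (fib (Suc n)) - golden_ratio_conj ^ n"
  by (simp add: fib_closed_form golden_ratio_def golden_ratio_conj_def field_simps)

lemma abs_golden_ratio_conj_less_1: "\<bar>golden_ratio_conj\<bar> < 1"
proof -
  have "1 < sqrt (5 :: real)" "sqrt (5 :: real) < 3"
    by (simp_all add: real_less_rsqrt real_less_lsqrt)
  then show ?thesis
    by (simp add: golden_ratio_conj_def)
qed

lemma fib_mult_golden_ratio_conj_pow:
  "real (fib n) * golden_ratio_conj ^ n = ((-1) ^ n - (golden_ratio_conj\<^sup>2) ^ n) / sqrt 5"
proof -
  have "real (fib n) = (golden_ratio ^ n - golden_ratio_conj ^ n) / sqrt 5"
    unfolding golden_ratio_def golden_ratio_conj_def by (rule fib_closed_form)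
  then have "real (fib n) * golden_ratio_conj ^ n
      = ((golden_ratio * golden_ratio_conj) ^ n - (golden_ratio_conj\<^sup>2) ^ n) / sqrt 5"
    by (simp add: left_diff_distrib power_mult_distrib power2_eq_square)
  then show ?thesis
    by (simp add: golden_ratio_mult_conj)
qed

lemma fib_mult_abs_golden_ratio_conj_pow_less_1:
  "real (fib n) * \<bar>golden_ratio_conj\<bar> ^ n < 1"
proof -
  define q where "q = (golden_ratio_conj\<^sup>2) ^ n"
  have "golden_ratio_conj\<^sup>2 \<le> 1"
    using abs_golden_ratio_conj_less_1 by (simp add: abs_square_le_1)
  then have "0 \<le> q" "q \<le> 1"
    unfolding q_def by (simp_all add: power_le_one)
  then have "\<bar>(-1) ^ n - q\<bar> \<le> 2"
    by (cases "even n") auto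
  moreover have "2 < sqrt (5 :: real)"
    by (simp add: real_less_rsqrt)
  ultimately have "\<bar>real (fib n) * golden_ratio_conj ^ n\<bar> < 1"
    by (simp add: fib_mult_golden_ratio_conj_pow q_def)
  then show ?thesis
    by (simp add: abs_mult power_abs)
qed

(* golden_rank n k is the position of frac (k * phi) among frac (phi), ..., frac (fib n * phi). *)
definition golden_rank :: "nat \<Rightarrow> nat \<Rightarrow> nat" where
  "golden_rank n = affine_mod (fib n) (fib (Suc n)) (if odd n then 1 else 0)"

lemma frac_golden_ratio_mult:
  assumes k: "k \<in> {1..fib n}"
  shows "\<exists>\<theta>. 0 \<le> \<theta> \<and> \<theta> < 1 \<and>
    frac (real k * golden_ratio) = (real (golden_rank n k) - 1 + \<theta>) / real (fib n)"
proof -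
  define c :: int where "c = (if odd n then 1 else 0)"
  define t where "t = real k * golden_ratio_conj ^ n"
  define a where "a = int (fib (Suc n)) * int k + c - 1"
  have F: "fib n > 0" using k by simp
  have "\<bar>t\<bar> \<le> real (fib n) * \<bar>golden_ratio_conj\<bar> ^ n"
    using k by (simp add: t_def abs_mult power_abs mult_right_mono)
  then have "\<bar>t\<bar> < 1"
    using fib_mult_abs_golden_ratio_conj_pow_less_1[of n] by linarith
  moreover have "golden_ratio_conj < 0"
    using abs_golden_ratio_conj_less_1 by (simp add: golden_ratio_conj_def)
  \<comment> \<open>the sign of \<open>golden_ratio_conj ^ n\<close> is that of \<open>(-1) ^ n\<close>, whence the shift \<open>c\<close>\<close>
  ultimately have "0 < c + t" "c + t < 1"
    using k by (auto simp: c_def t_def zero_less_mult_iff mult_less_0_iff zero_less_power_eq)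
  moreover have "real k * golden_ratio = (of_int a + (1 - c - t)) / real (fib n)"
  proof -
    have "real k * golden_ratio * real (fib n) = real k * (real (fib (Suc n)) - golden_ratio_conj ^ n)"
      by (metis fib_mult_golden_ratio mult.assoc mult.commute)
    then show ?thesis
      using F by (simp add: a_def t_def field_simps)
  qed
  moreover have "real (golden_rank n k) - 1 = of_int (a mod int (fib n))"
    using k F by (simp add: golden_rank_def affine_mod_def a_def c_def)
  ultimately show ?thesis
    using F by (intro exI[of _ "1 - c - t"]) (simp add: frac_of_int_add_div)
qed

lemma golden_rank_permutes: "golden_rank n permutes {1..fib n}"
  unfolding golden_rank_def
  by (rule affine_mod_permutes) (use coprime_fib_Suc_nat[of n] in \<open>simp add: coprime_commute\<close>)

lemma golden_rank_less_imp_frac_less: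
  assumes "j \<in> {1..fib n}" "k \<in> {1..fib n}" "golden_rank n j < golden_rank n k"
  shows "frac (real j * golden_ratio) < frac (real k * golden_ratio)"
proof -
  obtain \<theta> \<eta> where \<theta>: "0 \<le> \<theta>" "\<theta> < 1" and \<eta>: "0 \<le> \<eta>" "\<eta> < 1"
    and j: "frac (real j * golden_ratio) = (real (golden_rank n j) - 1 + \<theta>) / real (fib n)"
    and k: "frac (real k * golden_ratio) = (real (golden_rank n k) - 1 + \<eta>) / real (fib n)"
    using frac_golden_ratio_mult[OF assms(1)] frac_golden_ratio_mult[OF assms(2)] by blast
  have "real (golden_rank n j) - 1 + \<theta> < real (golden_rank n k) - 1 + \<eta>"
    using assms(3) \<theta> \<eta> by linarith
  moreover have "fib n > 0" using assms(1) by simp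
  ultimately show ?thesis
    unfolding j k by (simp add: divide_strict_right_mono)
qed

lemma kronecker_perm_golden_ratio_fib:
  "kronecker_perm golden_ratio (fib n) = inv (golden_rank n)"
  using golden_rank_permutes golden_rank_less_imp_frac_less by (rule kronecker_perm_eq_inv)

lemma fib_Suc_square_cong: "[int (fib (Suc n)) * int (fib (Suc n)) = (-1) ^ n] (mod int (fib n))"
proof -
  have "int (fib (Suc n)) * int (fib (Suc n)) = int (fib (Suc (Suc n))) * int (fib n) + (-1) ^ n"
    using fib_Cassini_int[of n] unfolding of_nat_mult of_nat_power power2_eq_square by linarith
  then show ?thesis
    by (simp add: cong_iff_dvd_diff)
qed

lemma even_fib_add_3_iff: "even (fib (n + 3)) \<longleftrightarrow> even (fib n)"
  by (simp add: numeral_3_eq_3) blast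

lemma even_fib_iff: "even (fib n) \<longleftrightarrow> 3 dvd n"
proof (induction n rule: less_induct)
  case (less n)
  show ?case
  proof (cases "n < 3")
    case True
    then have "n = 0 \<or> n = 1 \<or> n = 2" by auto
    then show ?thesis by auto
  next
    case False
    then obtain m where "n = m + 3"
      by (metis add.commute le_Suc_ex not_less)
    then show ?thesis
      using less.IH[of m] even_fib_add_3_iff[of m] by simp
  qed
qed

theorem theorem1:
  fixes n :: nat
  assumes "n > 0"
  defines "\<sigma> \<equiv> kronecker_perm golden_ratio (fib n)"
  defines "C \<equiv> cycles_of \<sigma> {1..fib n}"
  shows "(even n \<longrightarrow> (\<forall>c\<in>C. card c \<in> {1, 2}))
       \<and> ((n mod 6 = 1 \<or> n mod 6 = 5) \<longrightarrow>
            (\<forall>c\<in>C. card c \<in> {1, 4}) \<and> card {c\<in>C. card c = 1} = 1)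
       \<and> (n mod 6 = 3 \<longrightarrow>
            (\<forall>c\<in>C. card c \<in> {2, 4}) \<and> card {c\<in>C. card c = 2} = 1)"
proof -
  let ?m = "int (fib (Suc n))"
  have C: "C = cycles_of (affine_mod (fib n) ?m (if odd n then 1 else 0)) {1..fib n}"
    using cycles_of_inv[OF permutes_imp_permutation[OF _ golden_rank_permutes]]
    by (simp add: C_def \<sigma>_def kronecker_perm_golden_ratio_fib golden_rank_def)
  have square: "[?m * ?m = (if even n then 1 else -1)] (mod int (fib n))"
    using fib_Suc_square_cong[of n] by (simp add: minus_one_power_iff)
  have "\<forall>c\<in>C. card c \<in> {1, 2}" if "even n"
    using cycles_of_affine_mod_involution square that by (simp add: C)
  moreover have "(\<forall>c\<in>C. card c \<in> {1, 4}) \<and> card {c\<in>C. card c = 1} = 1"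
    if "n mod 6 = 1 \<or> n mod 6 = 5"
  proof -
    from that have "odd n" "odd (fib n)"
      unfolding even_fib_iff by presburger+
    then show ?thesis
      using cycles_of_affine_mod_sqrt_neg1_odd square by (simp add: C)
  qed
  moreover have "(\<forall>c\<in>C. card c \<in> {2, 4}) \<and> card {c\<in>C. card c = 2} = 1"
    if "n mod 6 = 3"
  proof -
    from that have "odd n" "even (fib n)"
      unfolding even_fib_iff by presburger+
    then show ?thesis
      using cycles_of_affine_mod_sqrt_neg1_even fib_neq_0_nat[OF assms(1)] square by (simp add: C)
  qed
  ultimately show ?thesis
    by blast
qed

end
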